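(* For every $k\ge1$ there is a canonical isomorphism $\operatorname{coker}\beta^{(k)}\cong\mathcal I^kH^2(C)/\mathcal I^{k+1}H^2(C)$.
   Context: Let $\mathcal R$ be a (possibly non-commutative) ring, $\mathcal I\subset\mathcal R$ a two-sided ideal, and $C=[C^1\xrightarrow{d}C^2]$ a complex of left $\mathcal R$-modules concentrated in degrees 1 and 2, so $H^2(C)=\operatorname{coker}d$. The filtration $\{\mathcal I^iC\}_{i\ge0}$ gives a spectral sequence with $Z_k^{i,j}=\ker(\mathcal I^iC^{i+j}\xrightarrow{d}C^{i+j+1}/\mathcal I^{i+k}C^{i+j+1})$, $B_k^{i,j}=\mathcal I^iC^{i+j}\cap d(\mathcal I^{i-k}C^{i+j-1})$ ($\mathcal I^m=\mathcal R$ for $m\le0$), $E_k^{i,j}=Z_k^{i,j}/(Z_{k-1}^{i+1,j-1}+B_{k-1}^{i,j})$, differentials $d_k^{i,j}:E_k^{i,j}\to E_k^{i+k,j+1-k}$ induced by $d$. The $k$-th derived Bockstein map is $\beta^{(k)}=d_k^{0,1}:E_k^{0,1}\to E_k^{k,2-k}$. *)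

theory Defs
  imports "HOL-Algebra.Coset" "HOL-Library.Product_Plus"
begin

definition lmod :: "('r::ring_1 \<Rightarrow> 'm::ab_group_add \<Rightarrow> 'm) \<Rightarrow> bool" where
  "lmod sm \<longleftrightarrow>
     (\<forall>r x y. sm r (x + y) = sm r x + sm r y) \<and>
     (\<forall>r s x. sm (r + s) x = sm r x + sm s x) \<and>
     (\<forall>r s x. sm (r * s) x = sm r (sm s x)) \<and>
     (\<forall>x. sm 1 x = x)"

definition rlinear :: "('r::ring_1 \<Rightarrow> 'a::ab_group_add \<Rightarrow> 'a) \<Rightarrow> ('r \<Rightarrow> 'b::ab_group_add \<Rightarrow> 'b)
    \<Rightarrow> ('a \<Rightarrow> 'b) \<Rightarrow> bool" where
  "rlinear sa sb f \<longleftrightarrow> (\<forall>x y. f (x + y) = f x + f y) \<and> (\<forall>r x. f (sa r x) = sb r (f x))"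

definition two_sided_ideal :: "'r::ring_1 set \<Rightarrow> bool" where
  "two_sided_ideal I \<longleftrightarrow> 0 \<in> I \<and> (\<forall>a\<in>I. \<forall>b\<in>I. a + b \<in> I) \<and> (\<forall>a\<in>I. - a \<in> I) \<and>
     (\<forall>a\<in>I. \<forall>r. r * a \<in> I \<and> a * r \<in> I)"

inductive_set addspan :: "'m::ab_group_add set \<Rightarrow> 'm set" for S where
  zero: "0 \<in> addspan S"
| gen: "x \<in> S \<Longrightarrow> x \<in> addspan S"
| add: "x \<in> addspan S \<Longrightarrow> y \<in> addspan S \<Longrightarrow> x + y \<in> addspan S"
| neg: "x \<in> addspan S \<Longrightarrow> - x \<in> addspan S"

fun idpow :: "'r::ring_1 set \<Rightarrow> nat \<Rightarrow> 'r set" where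
  "idpow I 0 = UNIV"
| "idpow I (Suc n) = addspan {a * b | a b. a \<in> idpow I n \<and> b \<in> I}"

definition modpow :: "('r::ring_1 \<Rightarrow> 'm::ab_group_add \<Rightarrow> 'm) \<Rightarrow> 'r set \<Rightarrow> nat \<Rightarrow> 'm set \<Rightarrow> 'm set" where
  "modpow sm I n M = addspan {sm a m | a m. a \<in> idpow I n \<and> m \<in> M}"

definition ssum :: "'m::ab_group_add set \<Rightarrow> 'm set \<Rightarrow> 'm set" where
  "ssum A B = {a + b | a b. a \<in> A \<and> b \<in> B}"

definition subgrp :: "'m::ab_group_add set \<Rightarrow> 'm monoid" where
  "subgrp A = \<lparr>carrier = A, mult = (+), one = 0\<rparr>"

abbreviation addgrp :: "'m::ab_group_add monoid" where
  "addgrp \<equiv> subgrp UNIV"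

text \<open>A filtered complex inside an ambient abelian group 'm: F i n is the piece F^i C^n
  (with F^i C^n = C^n for i <= 0), and d is the (total) differential.\<close>

definition ssZ :: "(int \<Rightarrow> int \<Rightarrow> 'm::ab_group_add set) \<Rightarrow> ('m \<Rightarrow> 'm) \<Rightarrow> int \<Rightarrow> int \<Rightarrow> int \<Rightarrow> 'm set" where
  "ssZ F d k i j = {x \<in> F i (i + j). d x \<in> F (i + k) (i + j + 1)}"

definition ssB :: "(int \<Rightarrow> int \<Rightarrow> 'm::ab_group_add set) \<Rightarrow> ('m \<Rightarrow> 'm) \<Rightarrow> int \<Rightarrow> int \<Rightarrow> int \<Rightarrow> 'm set" where
  "ssB F d k i j = F i (i + j) \<inter> d ` (F (i - k) (i + j - 1))"

definition ssDen :: "(int \<Rightarrow> int \<Rightarrow> 'm::ab_group_add set) \<Rightarrow> ('m \<Rightarrow> 'm) \<Rightarrow> int \<Rightarrow> int \<Rightarrow> int \<Rightarrow> 'm set" where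
  "ssDen F d k i j = ssum (ssZ F d (k - 1) (i + 1) (j - 1)) (ssB F d (k - 1) i j)"

definition ssE :: "(int \<Rightarrow> int \<Rightarrow> 'm::ab_group_add set) \<Rightarrow> ('m \<Rightarrow> 'm) \<Rightarrow> int \<Rightarrow> int \<Rightarrow> int \<Rightarrow> 'm set monoid" where
  "ssE F d k i j = subgrp (ssZ F d k i j) Mod ssDen F d k i j"

text \<open>The differential d_k : E_k^{i,j} -> E_k^{i+k,j+1-k}, induced by d on representatives.\<close>
definition ssd :: "(int \<Rightarrow> int \<Rightarrow> 'm::ab_group_add set) \<Rightarrow> ('m \<Rightarrow> 'm) \<Rightarrow> int \<Rightarrow> int \<Rightarrow> int \<Rightarrow> 'm set \<Rightarrow> 'm set" where
  "ssd F d k i j c = ssDen F d k (i + k) (j + 1 - k) #>\<^bsub>addgrp\<^esub> d (SOME x. x \<in> c)"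

definition ssd_coker :: "(int \<Rightarrow> int \<Rightarrow> 'm::ab_group_add set) \<Rightarrow> ('m \<Rightarrow> 'm) \<Rightarrow> int \<Rightarrow> int \<Rightarrow> int \<Rightarrow> 'm set set monoid" where
  "ssd_coker F d k i j =
     ssE F d k (i + k) (j + 1 - k) Mod (ssd F d k i j ` carrier (ssE F d k i j))"

text \<open>The complex is realised inside the ambient group 'a \<times> 'b:
  C^1 = 'a \<times> {0}, C^2 = {0} \<times> 'b, all other C^n = 0, total differential (x,y) \<mapsto> (0, d x).
  F i n = I^i C^n (with I^m = R for m <= 0).\<close>
definition twoF :: "('r::ring_1 \<Rightarrow> 'a::ab_group_add \<Rightarrow> 'a) \<Rightarrow> ('r \<Rightarrow> 'b::ab_group_add \<Rightarrow> 'b) \<Rightarrow> 'r set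
    \<Rightarrow> int \<Rightarrow> int \<Rightarrow> ('a \<times> 'b) set" where
  "twoF sa sb I i n =
     (if n = 1 then (\<lambda>x. (x, 0)) ` modpow sa I (nat i) UNIV
      else if n = 2 then (\<lambda>y. (0, y)) ` modpow sb I (nat i) UNIV
      else {0})"

definition twod :: "('a::ab_group_add \<Rightarrow> 'b::ab_group_add) \<Rightarrow> 'a \<times> 'b \<Rightarrow> 'a \<times> 'b" where
  "twod d p = (0, d (fst p))"

text \<open>k-th derived Bockstein map beta^(k) = d_k^{0,1} and its cokernel.\<close>
definition bockstein_coker :: "('r::ring_1 \<Rightarrow> 'a::ab_group_add \<Rightarrow> 'a) \<Rightarrow> ('r \<Rightarrow> 'b::ab_group_add \<Rightarrow> 'b) \<Rightarrow> 'r set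
    \<Rightarrow> ('a \<Rightarrow> 'b) \<Rightarrow> nat \<Rightarrow> ('a \<times> 'b) set set monoid" where
  "bockstein_coker sa sb I d k = ssd_coker (twoF sa sb I) (twod d) (int k) 0 1"

definition H2 :: "('a::ab_group_add \<Rightarrow> 'b::ab_group_add) \<Rightarrow> 'b set monoid" where
  "H2 d = subgrp UNIV Mod range d"

text \<open>I^n H^2(C): the submodule of H^2 generated by I^n acting on classes, i.e. the image of
  I^n C^2 in H^2 (the induced action on H^2 is r [y] = [r y]).\<close>
definition IH2 :: "('r::ring_1 \<Rightarrow> 'b::ab_group_add \<Rightarrow> 'b) \<Rightarrow> 'r set \<Rightarrow> ('a::ab_group_add \<Rightarrow> 'b) \<Rightarrow> nat \<Rightarrow> 'b set set" where
  "IH2 sb I d n = (\<lambda>y. range d #>\<^bsub>addgrp\<^esub> y) ` modpow sb I n UNIV"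

definition gradedH2 :: "('r::ring_1 \<Rightarrow> 'b::ab_group_add \<Rightarrow> 'b) \<Rightarrow> 'r set \<Rightarrow> ('a::ab_group_add \<Rightarrow> 'b) \<Rightarrow> nat \<Rightarrow> 'b set set monoid" where
  "gradedH2 sb I d k = (H2 d)\<lparr>carrier := IH2 sb I d k\<rparr> Mod IH2 sb I d (Suc k)"

text \<open>For y in I^k C^2 = Z_k^{k,2-k}: the class of (0,y) in E_k^{k,2-k}, then in coker beta^(k).\<close>
definition bock_class :: "('r::ring_1 \<Rightarrow> 'a::ab_group_add \<Rightarrow> 'a) \<Rightarrow> ('r \<Rightarrow> 'b::ab_group_add \<Rightarrow> 'b) \<Rightarrow> 'r set
    \<Rightarrow> ('a \<Rightarrow> 'b) \<Rightarrow> nat \<Rightarrow> 'b \<Rightarrow> ('a \<times> 'b) set set" where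
  "bock_class sa sb I d k y =
     (let F = twoF sa sb I; D = twod d; k' = int k in
      (ssd F D k' 0 1 ` carrier (ssE F D k' 0 1))
        #>\<^bsub>ssE F D k' (0 + k') (1 + 1 - k')\<^esub> (ssDen F D k' (0 + k') (1 + 1 - k') #>\<^bsub>addgrp\<^esub> (0, y)))"

definition gr_class :: "('r::ring_1 \<Rightarrow> 'b::ab_group_add \<Rightarrow> 'b) \<Rightarrow> 'r set \<Rightarrow> ('a::ab_group_add \<Rightarrow> 'b) \<Rightarrow> nat \<Rightarrow> 'b \<Rightarrow> 'b set set" where
  "gr_class sb I d k y = IH2 sb I d (Suc k) #>\<^bsub>H2 d\<^esub> (range d #>\<^bsub>addgrp\<^esub> y)"

end

theory Submission
  imports Defs
begin

text \<open>
  For the two-term complex, E_k^{k,2-k} is I^k C^2 / (I^{k+1} C^2 + (I^k C^2 \<inter> d(I C^1))),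
  and the image of \<beta>^(k) consists of the classes of those d x that lie in I^k C^2.
  Sending the class of y \<in> I^k C^2 to the class of [y] in I^k H^2 / I^{k+1} H^2 is a
  well-defined surjective homomorphism, because the denominator lies in I^{k+1} C^2 + d C^1.
  Its kernel consists of the classes of y = m + d x with m \<in> I^{k+1} C^2; then d x \<in> I^k C^2
  and y is congruent to d x, so the kernel is exactly the image of \<beta>^(k), and the first
  isomorphism theorem applies.
\<close>

section \<open>Additive subgroups and their cosets\<close>

definition add_subgroup :: "'m::ab_group_add set \<Rightarrow> bool" where
  "add_subgroup S \<longleftrightarrow> 0 \<in> S \<and> (\<forall>x\<in>S. \<forall>y\<in>S. x + y \<in> S) \<and> (\<forall>x\<in>S. - x \<in> S)"

lemma
  assumes "add_subgroup S"
  shows add_subgroup_zero: "0 \<in> S"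
    and add_subgroup_add: "x \<in> S \<Longrightarrow> y \<in> S \<Longrightarrow> x + y \<in> S"
    and add_subgroup_minus: "x \<in> S \<Longrightarrow> - x \<in> S"
    and add_subgroup_diff: "x \<in> S \<Longrightarrow> y \<in> S \<Longrightarrow> x - y \<in> S"
  using assms unfolding add_subgroup_def diff_conv_add_uminus by blast+

lemma add_subgroup_addspan: "add_subgroup (addspan X)"
  unfolding add_subgroup_def by (simp add: addspan.intros)

lemma addspan_least:
  assumes "add_subgroup S" and "X \<subseteq> S"
  shows "addspan X \<subseteq> S"
proof
  fix x assume "x \<in> addspan X"
  then show "x \<in> S"
    by induction
      (use assms in \<open>auto intro: add_subgroup_zero add_subgroup_add add_subgroup_minus\<close>)
qed

lemma addspan_mono: "X \<subseteq> Y \<Longrightarrow> addspan X \<subseteq> addspan Y"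
  by (rule addspan_least[OF add_subgroup_addspan]) (auto intro: addspan.gen)

lemma ssumI: "a \<in> A \<Longrightarrow> b \<in> B \<Longrightarrow> a + b \<in> ssum A B"
  unfolding ssum_def by blast

lemma ssumE:
  assumes "x \<in> ssum A B"
  obtains a b where "a \<in> A" "b \<in> B" "x = a + b"
  using assms unfolding ssum_def by blast

lemma ssum_zero_right [simp]: "ssum A {0} = A"
  unfolding ssum_def by simp

lemma add_subgroup_ssum:
  assumes A: "add_subgroup A" and B: "add_subgroup B"
  shows "add_subgroup (ssum A B)"
proof -
  have "x + y \<in> ssum A B" if x: "x \<in> ssum A B" and y: "y \<in> ssum A B" for x y
  proof -
    obtain a1 b1 where "a1 \<in> A" "b1 \<in> B" "x = a1 + b1"
      using x by (rule ssumE)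
    moreover obtain a2 b2 where "a2 \<in> A" "b2 \<in> B" "y = a2 + b2"
      using y by (rule ssumE)
    ultimately have "x + y = (a1 + a2) + (b1 + b2)" "a1 + a2 \<in> A" "b1 + b2 \<in> B"
      by (simp_all add: add_ac add_subgroup_add A B)
    then show ?thesis by (simp add: ssumI)
  qed
  moreover have "- x \<in> ssum A B" if x: "x \<in> ssum A B" for x
  proof -
    obtain a b where "a \<in> A" "b \<in> B" "x = a + b"
      using x by (rule ssumE)
    then have "- x = - a + - b" "- a \<in> A" "- b \<in> B"
      by (simp_all add: add_subgroup_minus A B)
    then show ?thesis by (metis ssumI)
  qed
  moreover have "0 + 0 \<in> ssum A B"
    by (intro ssumI add_subgroup_zero A B)
  ultimately show ?thesis
    unfolding add_subgroup_def by simp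
qed

lemma add_subgroup_Int: "add_subgroup A \<Longrightarrow> add_subgroup B \<Longrightarrow> add_subgroup (A \<inter> B)"
  unfolding add_subgroup_def by blast

lemma additive_zero:
  fixes f :: "'a::ab_group_add \<Rightarrow> 'b::ab_group_add"
  assumes "\<And>x y. f (x + y) = f x + f y"
  shows "f 0 = 0"
proof -
  have "f 0 + f 0 = f 0 + 0" using assms[of 0 0] by simp
  then show ?thesis by (rule add_left_imp_eq)
qed

lemma additive_minus:
  fixes f :: "'a::ab_group_add \<Rightarrow> 'b::ab_group_add"
  assumes "\<And>x y. f (x + y) = f x + f y"
  shows "f (- x) = - f x"
proof -
  have "f x + f (- x) = 0"
    using assms[of x "- x"] additive_zero[of f, OF assms] by simp
  then show ?thesis by (rule minus_unique[symmetric])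
qed

lemma add_subgroup_image:
  assumes "add_subgroup A" and f: "\<And>x y. f (x + y) = f x + f y"
  shows "add_subgroup (f ` A)"
  using assms(1) unfolding add_subgroup_def
  by (auto simp flip: f additive_zero[of f, OF f] additive_minus[of f, OF f])

definition add_rcoset :: "'m::ab_group_add set \<Rightarrow> 'm \<Rightarrow> 'm set" where
  "add_rcoset N a = (\<lambda>h. h + a) ` N"

lemma r_coset_subgrp: "N #>\<^bsub>subgrp A\<^esub> a = add_rcoset N a"
  unfolding r_coset_def add_rcoset_def subgrp_def by auto

lemma r_coset_eq_image: "H #>\<^bsub>G\<^esub> a = (\<lambda>h. h \<otimes>\<^bsub>G\<^esub> a) ` H"
  unfolding r_coset_def by blast

lemma add_rcoset_self: "0 \<in> N \<Longrightarrow> a \<in> add_rcoset N a"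
  unfolding add_rcoset_def by force

lemma add_rcoset_zero: "add_rcoset N 0 = N"
  by (simp add: add_rcoset_def)

lemma add_rcoset_eq_iff:
  assumes N: "add_subgroup N"
  shows "add_rcoset N a = add_rcoset N b \<longleftrightarrow> a - b \<in> N"
proof
  assume "add_rcoset N a = add_rcoset N b"
  then have "a \<in> add_rcoset N b" using add_rcoset_self[OF add_subgroup_zero[OF N]] by metis
  then show "a - b \<in> N" unfolding add_rcoset_def by auto
next
  have subset: "add_rcoset N a \<subseteq> add_rcoset N b" if "a - b \<in> N" for a b
  proof
    fix x assume "x \<in> add_rcoset N a"
    then obtain h where "h \<in> N" "x = (h + (a - b)) + b" unfolding add_rcoset_def by auto
    with that show "x \<in> add_rcoset N b"
      unfolding add_rcoset_def by (blast intro: add_subgroup_add[OF N])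
  qed
  assume "a - b \<in> N"
  moreover from add_subgroup_minus[OF N this] have "b - a \<in> N" by simp
  ultimately show "add_rcoset N a = add_rcoset N b" using subset by blast
qed

lemma ssum_add_rcoset:
  assumes N: "add_subgroup N"
  shows "ssum (add_rcoset N a) (add_rcoset N b) = add_rcoset N (a + b)"
proof (intro equalityI subsetI)
  fix x assume "x \<in> ssum (add_rcoset N a) (add_rcoset N b)"
  then obtain h1 h2 where "h1 \<in> N" "h2 \<in> N" "x = (h1 + h2) + (a + b)"
    unfolding add_rcoset_def by (auto elim!: ssumE simp: add_ac)
  then show "x \<in> add_rcoset N (a + b)"
    unfolding add_rcoset_def by (blast intro: add_subgroup_add[OF N])
next
  fix x assume "x \<in> add_rcoset N (a + b)"
  then obtain h where "h \<in> N" "x = (h + a) + (0 + b)"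
    unfolding add_rcoset_def by (auto simp: add_ac)
  then show "x \<in> ssum (add_rcoset N a) (add_rcoset N b)"
    unfolding add_rcoset_def by (blast intro: ssumI add_subgroup_zero[OF N])
qed

lemma some_in_add_rcoset:
  assumes "0 \<in> N"
  obtains t where "t \<in> N" "(SOME p. p \<in> add_rcoset N a) = t + a"
proof -
  have "(SOME p. p \<in> add_rcoset N a) \<in> add_rcoset N a"
    using add_rcoset_self[OF assms] by (rule someI)
  then show thesis using that unfolding add_rcoset_def by blast
qed

lemma set_mult_image_add_rcoset:
  assumes "add_subgroup N"
  shows "{ssum A B | A B. A \<in> add_rcoset N ` X \<and> B \<in> add_rcoset N ` Y} = add_rcoset N ` ssum X Y"
proof (intro equalityI subsetI)
  fix C assume "C \<in> {ssum A B | A B. A \<in> add_rcoset N ` X \<and> B \<in> add_rcoset N ` Y}"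
  then obtain a b where "a \<in> X" "b \<in> Y" "C = ssum (add_rcoset N a) (add_rcoset N b)"
    by blast
  then show "C \<in> add_rcoset N ` ssum X Y"
    by (simp add: ssum_add_rcoset[OF assms] ssumI)
next
  fix C assume "C \<in> add_rcoset N ` ssum X Y"
  then obtain a b where "a \<in> X" "b \<in> Y" "C = add_rcoset N (a + b)"
    by (auto elim: ssumE)
  then show "C \<in> {ssum A B | A B. A \<in> add_rcoset N ` X \<and> B \<in> add_rcoset N ` Y}"
    by (force simp flip: ssum_add_rcoset[OF assms])
qed

lemma image_add_rcoset_eq_iff:
  assumes N: "add_subgroup N" and M: "add_subgroup M"
  shows "add_rcoset N ` add_rcoset M a = add_rcoset N ` add_rcoset M b \<longleftrightarrow> a - b \<in> ssum M N"
proof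
  assume "add_rcoset N ` add_rcoset M a = add_rcoset N ` add_rcoset M b"
  moreover have "add_rcoset N a \<in> add_rcoset N ` add_rcoset M a"
    using add_rcoset_self[OF add_subgroup_zero[OF M]] by blast
  ultimately obtain m where "m \<in> M" "add_rcoset N a = add_rcoset N (m + b)"
    unfolding add_rcoset_def[of M] by auto
  then have "a - b = m + (a - (m + b))" "a - (m + b) \<in> N"
    by (simp_all add: add_rcoset_eq_iff[OF N])
  with \<open>m \<in> M\<close> show "a - b \<in> ssum M N" by (metis ssumI)
next
  have subset: "add_rcoset N ` add_rcoset M a \<subseteq> add_rcoset N ` add_rcoset M b"
    if "a - b \<in> ssum M N" for a b
  proof
    fix X assume "X \<in> add_rcoset N ` add_rcoset M a"
    then obtain m where m: "m \<in> M" "X = add_rcoset N (m + a)"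
      unfolding add_rcoset_def[of M] by auto
    from that obtain m' n where "m' \<in> M" "n \<in> N" "a - b = m' + n" by (rule ssumE)
    then have "X = add_rcoset N ((m + m') + b)" "m + m' \<in> M"
      using m by (simp_all add: add_rcoset_eq_iff[OF N] add_subgroup_add[OF M] algebra_simps)
    then show "X \<in> add_rcoset N ` add_rcoset M b"
      unfolding add_rcoset_def[of M] by blast
  qed
  assume "a - b \<in> ssum M N"
  moreover from add_subgroup_minus[OF add_subgroup_ssum[OF M N] this] have "b - a \<in> ssum M N"
    by simp
  ultimately show "add_rcoset N ` add_rcoset M a = add_rcoset N ` add_rcoset M b"
    using subset by blast
qed

lemma comm_group_additive_image:
  fixes G :: "('c, 'z) monoid_scheme" and f :: "'m::ab_group_add \<Rightarrow> 'c"
  assumes S: "add_subgroup S" and carrier: "carrier G = f ` S"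
    and mult: "\<And>a b. a \<in> S \<Longrightarrow> b \<in> S \<Longrightarrow> f a \<otimes>\<^bsub>G\<^esub> f b = f (a + b)"
    and one: "\<one>\<^bsub>G\<^esub> = f 0"
  shows "comm_group G"
proof (rule comm_groupI)
  note closed = add_subgroup_zero[OF S] add_subgroup_add[OF S] add_subgroup_minus[OF S]
  show "\<one>\<^bsub>G\<^esub> \<in> carrier G" using closed by (auto simp: carrier one)
  fix x y z assume "x \<in> carrier G" "y \<in> carrier G" "z \<in> carrier G"
  then obtain a b c where abc: "a \<in> S" "b \<in> S" "c \<in> S" and "x = f a" "y = f b" "z = f c"
    unfolding carrier by blast
  then show "x \<otimes>\<^bsub>G\<^esub> y \<in> carrier G"
    and "x \<otimes>\<^bsub>G\<^esub> y \<otimes>\<^bsub>G\<^esub> z = x \<otimes>\<^bsub>G\<^esub> (y \<otimes>\<^bsub>G\<^esub> z)"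
    and "x \<otimes>\<^bsub>G\<^esub> y = y \<otimes>\<^bsub>G\<^esub> x"
    and "\<one>\<^bsub>G\<^esub> \<otimes>\<^bsub>G\<^esub> x = x"
    using closed by (simp_all add: carrier mult one add_ac)
  have "f (- a) \<in> carrier G" "f (- a) \<otimes>\<^bsub>G\<^esub> x = \<one>\<^bsub>G\<^esub>"
    using abc \<open>x = f a\<close> closed by (simp_all add: carrier mult one)
  then show "\<exists>y\<in>carrier G. y \<otimes>\<^bsub>G\<^esub> x = \<one>\<^bsub>G\<^esub>" by blast
qed

lemma carrier_subgrp [simp]: "carrier (subgrp A) = A"
  by (simp add: subgrp_def)

lemma set_mult_subgrp [simp]: "X <#>\<^bsub>subgrp A\<^esub> Y = ssum X Y"
  by (auto simp: set_mult_def ssum_def subgrp_def)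

lemma carrier_subgrp_Mod: "carrier (subgrp Z Mod N) = add_rcoset N ` Z"
  by (simp add: carrier_FactGroup r_coset_subgrp)

lemma comm_group_subgrp_Mod:
  assumes "add_subgroup Z" and N: "add_subgroup N"
  shows "comm_group (subgrp Z Mod N)"
  using assms(1) carrier_subgrp_Mod
  by (rule comm_group_additive_image)
    (simp_all add: ssum_add_rcoset[OF N] add_rcoset_zero)

lemma (in group_hom) image_kernel_rcos:
  "g \<in> carrier G \<Longrightarrow> h ` (kernel G H h #> g) = {h g}"
  by (auto simp: kernel_def r_coset_def intro!: imageI)

section \<open>Powers of an ideal\<close>

lemma idpow_mult_right:
  assumes "two_sided_ideal I" and "a \<in> idpow I n"
  shows "a * r \<in> idpow I n"
  using assms(2)
proof (induction n arbitrary: a r)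
  case 0
  then show ?case by simp
next
  case (Suc n)
  from Suc.prems have "a \<in> addspan {a * b |a b. a \<in> idpow I n \<and> b \<in> I}" by simp
  then have "a * r \<in> addspan {a * b |a b. a \<in> idpow I n \<and> b \<in> I}"
  proof (induction arbitrary: r)
    case zero
    then show ?case by (simp add: addspan.zero)
  next
    case (gen x)
    then obtain u v where "x = u * v" "u \<in> idpow I n" "v \<in> I" by auto
    moreover from \<open>v \<in> I\<close> have "v * r \<in> I"
      using assms(1) unfolding two_sided_ideal_def by blast
    ultimately show ?case by (auto simp: mult.assoc intro!: addspan.gen)
  next
    case (add x y)
    then show ?case by (simp add: distrib_right addspan.add)
  next
    case (neg x)
    then show ?case by (simp add: addspan.neg)
  qed
  then show ?case by simp
qed

lemma add_subgroup_idpow: "add_subgroup (idpow I n)"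
  by (cases n) (simp add: add_subgroup_def, simp add: add_subgroup_addspan)

lemma idpow_Suc_subset:
  assumes "two_sided_ideal I"
  shows "idpow I (Suc n) \<subseteq> idpow I n"
  using idpow_mult_right[OF assms]
  by (auto intro!: addspan_least[OF add_subgroup_idpow])

lemma add_subgroup_modpow: "add_subgroup (modpow sm I n M)"
  unfolding modpow_def by (rule add_subgroup_addspan)

lemma zero_in_modpow [simp]: "0 \<in> modpow sm I n M"
  by (rule add_subgroup_zero[OF add_subgroup_modpow])

lemma modpow_Suc_subset:
  assumes "two_sided_ideal I"
  shows "modpow sm I (Suc n) M \<subseteq> modpow sm I n M"
  unfolding modpow_def using idpow_Suc_subset[OF assms] by (intro addspan_mono) blast

lemma modpow_0_UNIV:
  assumes "lmod sm"
  shows "modpow sm I 0 UNIV = UNIV"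
proof -
  have "sm 1 m = m" for m
    using assms unfolding lmod_def by blast
  then have "m \<in> modpow sm I 0 UNIV" for m
    unfolding modpow_def by (auto intro!: addspan.gen exI[of _ 1])
  then show ?thesis by blast
qed

section \<open>The two-term complex\<close>

lemma twoF_1 [simp]: "twoF sa sb I i 1 = (\<lambda>x. (x, 0)) ` modpow sa I (nat i) UNIV"
  and twoF_2 [simp]: "twoF sa sb I i 2 = (\<lambda>y. (0, y)) ` modpow sb I (nat i) UNIV"
  and twoF_other [simp]: "n \<noteq> 1 \<Longrightarrow> n \<noteq> 2 \<Longrightarrow> twoF sa sb I i n = {0}"
  by (simp_all add: twoF_def)

locale two_term_complex =
  fixes sa :: "'r::ring_1 \<Rightarrow> 'a::ab_group_add \<Rightarrow> 'a"
    and sb :: "'r \<Rightarrow> 'b::ab_group_add \<Rightarrow> 'b"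
    and I :: "'r set"
    and d :: "'a \<Rightarrow> 'b"
  assumes lmod_sa: "lmod sa"
    and ideal: "two_sided_ideal I"
    and d_add: "d (x + y) = d x + d y"
begin

abbreviation IC1 :: "nat \<Rightarrow> 'a set" where "IC1 n \<equiv> modpow sa I n UNIV"
abbreviation IC2 :: "nat \<Rightarrow> 'b set" where "IC2 n \<equiv> modpow sb I n UNIV"

lemma d_0 [simp]: "d 0 = 0"
  using additive_zero[of d] d_add by blast

lemma add_subgroup_range_d: "add_subgroup (range d)"
  by (rule add_subgroup_image) (simp_all add: add_subgroup_def d_add)

lemma gr_class_eq: "gr_class sb I d n y = add_rcoset (range d) ` add_rcoset (IC2 (Suc n)) y"
  unfolding gr_class_def IH2_def r_coset_subgrp
  unfolding H2_def r_coset_eq_image image_image mult_FactGroup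
    set_mult_subgrp ssum_add_rcoset[OF add_subgroup_range_d]
  by (simp add: add_rcoset_def[of "IC2 _"] image_image)

lemma carrier_gradedH2: "carrier (gradedH2 sb I d n) = gr_class sb I d n ` IC2 n"
  unfolding gradedH2_def carrier_FactGroup gr_class_def IH2_def r_coset_subgrp
  by (simp add: r_coset_def image_image)

lemma one_gradedH2: "\<one>\<^bsub>gradedH2 sb I d n\<^esub> = gr_class sb I d n 0"
  by (simp add: gradedH2_def gr_class_eq IH2_def r_coset_subgrp add_rcoset_zero)

lemma mult_gradedH2:
  "gr_class sb I d n a \<otimes>\<^bsub>gradedH2 sb I d n\<^esub> gr_class sb I d n b = gr_class sb I d n (a + b)"
proof -
  have "gr_class sb I d n a \<otimes>\<^bsub>gradedH2 sb I d n\<^esub> gr_class sb I d n b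
      = {ssum A B | A B. A \<in> gr_class sb I d n a \<and> B \<in> gr_class sb I d n b}"
    unfolding gradedH2_def mult_FactGroup set_mult_def by (auto simp: H2_def)
  also have "\<dots> = add_rcoset (range d) `
      ssum (add_rcoset (IC2 (Suc n)) a) (add_rcoset (IC2 (Suc n)) b)"
    unfolding gr_class_eq by (rule set_mult_image_add_rcoset[OF add_subgroup_range_d])
  also have "\<dots> = gr_class sb I d n (a + b)"
    by (simp add: gr_class_eq ssum_add_rcoset[OF add_subgroup_modpow])
  finally show ?thesis .
qed

lemma comm_group_gradedH2: "comm_group (gradedH2 sb I d n)"
  by (rule comm_group_additive_image[OF add_subgroup_modpow carrier_gradedH2])
    (simp_all add: mult_gradedH2 one_gradedH2)

lemma gr_class_eq_iff:
  "gr_class sb I d n a = gr_class sb I d n b \<longleftrightarrow> a - b \<in> ssum (IC2 (Suc n)) (range d)"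
  unfolding gr_class_eq by (rule image_add_rcoset_eq_iff[OF add_subgroup_range_d add_subgroup_modpow])

abbreviation F :: "int \<Rightarrow> int \<Rightarrow> ('a \<times> 'b) set" where "F \<equiv> twoF sa sb I"
abbreviation D :: "'a \<times> 'b \<Rightarrow> 'a \<times> 'b" where "D \<equiv> twod d"
abbreviation in1 :: "'a \<Rightarrow> 'a \<times> 'b" where "in1 x \<equiv> (x, 0)"
abbreviation in2 :: "'b \<Rightarrow> 'a \<times> 'b" where "in2 y \<equiv> (0, y)"

abbreviation Den :: "nat \<Rightarrow> ('a \<times> 'b) set" where
  "Den n \<equiv> ssDen F D (int n) (int n) (2 - int n)"

lemma D_in1 [simp]: "D (in1 x) = in2 (d x)"
  and D_in2 [simp]: "D (in2 y) = 0"
  by (simp_all add: twod_def zero_prod_def)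

lemma D_in1_image: "x \<in> A \<Longrightarrow> in2 (d x) \<in> D ` in1 ` A"
  by (metis D_in1 imageI)

lemma ssZ_source: "ssZ F D (int n) 0 1 = in1 ` {x. d x \<in> IC2 n}"
  unfolding ssZ_def by (auto simp: modpow_0_UNIV[OF lmod_sa])

lemma ssDen_source: "ssDen F D (int n) 0 1 = in1 ` {x \<in> IC1 1. d x \<in> IC2 n}"
proof -
  have "ssZ F D (int n - 1) 1 0 = in1 ` {x \<in> IC1 1. d x \<in> IC2 n}"
    unfolding ssZ_def by auto
  moreover have "ssB F D (int n - 1) 0 1 = {0}"
    unfolding ssB_def by (auto simp: modpow_0_UNIV[OF lmod_sa] twod_def zero_prod_def)
  ultimately show ?thesis
    by (simp add: ssDen_def)
qed

lemma ssZ_target: "ssZ F D (int n) (int n) (2 - int n) = in2 ` IC2 n"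
  unfolding ssZ_def by auto

lemma ssDen_target: "Den n = ssum (in2 ` IC2 (Suc n)) (in2 ` IC2 n \<inter> D ` in1 ` IC1 1)"
proof -
  have "nat (int n + 1) = Suc n" by simp
  then have "ssZ F D (int n - 1) (int n + 1) (2 - int n - 1) = in2 ` IC2 (Suc n)"
    unfolding ssZ_def by auto
  moreover have "ssB F D (int n - 1) (int n) (2 - int n) = in2 ` IC2 n \<inter> D ` in1 ` IC1 1"
    unfolding ssB_def by simp
  ultimately show ?thesis
    by (simp add: ssDen_def)
qed

lemma add_subgroup_Den: "add_subgroup (Den n)"
  unfolding ssDen_target
  by (intro add_subgroup_ssum add_subgroup_Int add_subgroup_image add_subgroup_modpow)
    (simp_all add: twod_def d_add)

lemma snd_Den: "p \<in> Den n \<Longrightarrow> snd p \<in> ssum (IC2 (Suc n)) (range d)"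
  unfolding ssDen_target by (auto elim!: ssumE intro!: ssumI)

lemma in2_in_Den: "y \<in> IC2 (Suc n) \<Longrightarrow> in2 y \<in> Den n"
proof -
  assume "y \<in> IC2 (Suc n)"
  moreover have "in2 0 \<in> in2 ` IC2 n \<inter> D ` in1 ` IC1 1"
    using D_in1_image[of 0 "IC1 1"] by simp
  ultimately have "in2 y + in2 0 \<in> Den n"
    unfolding ssDen_target by (intro ssumI) simp_all
  then show ?thesis by simp
qed

lemma D_ssDen_source: "p \<in> ssDen F D (int n) 0 1 \<Longrightarrow> D p \<in> Den n"
proof -
  assume "p \<in> ssDen F D (int n) 0 1"
  then obtain x where "x \<in> IC1 1" "d x \<in> IC2 n" "p = in1 x"
    unfolding ssDen_source by blast
  then have "in2 0 + D p \<in> Den n"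
    unfolding ssDen_target by (intro ssumI) (auto intro: D_in1_image)
  then show ?thesis by (simp flip: zero_prod_def)
qed

lemma zero_in_ssDen_source: "0 \<in> ssDen F D (int n) 0 1"
proof -
  have "in1 0 \<in> in1 ` {x \<in> IC1 1. d x \<in> IC2 n}" by (intro imageI) simp
  then show ?thesis by (simp add: ssDen_source zero_prod_def)
qed

abbreviation E_source :: "nat \<Rightarrow> ('a \<times> 'b) set monoid" where
  "E_source n \<equiv> ssE F D (int n) 0 1"
abbreviation E_target :: "nat \<Rightarrow> ('a \<times> 'b) set monoid" where
  "E_target n \<equiv> ssE F D (int n) (int n) (2 - int n)"
abbreviation bockstein :: "nat \<Rightarrow> ('a \<times> 'b) set \<Rightarrow> ('a \<times> 'b) set" where
  "bockstein n \<equiv> ssd F D (int n) 0 1"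

lemma carrier_E_target: "carrier (E_target n) = add_rcoset (Den n) ` in2 ` IC2 n"
  unfolding ssE_def carrier_subgrp_Mod ssZ_target ..

lemma mult_E_target: "X \<otimes>\<^bsub>E_target n\<^esub> Y = ssum X Y"
  by (simp add: ssE_def)

lemma comm_group_E_target: "comm_group (E_target n)"
  unfolding ssE_def ssZ_target
  by (intro comm_group_subgrp_Mod add_subgroup_Den add_subgroup_image[OF add_subgroup_modpow]) simp

lemma bockstein_add_rcoset:
  "bockstein n (add_rcoset (ssDen F D (int n) 0 1) p) = add_rcoset (Den n) (D p)"
proof -
  obtain t where t: "t \<in> ssDen F D (int n) 0 1"
    and some: "(SOME q. q \<in> add_rcoset (ssDen F D (int n) 0 1) p) = t + p"
    by (rule some_in_add_rcoset[OF zero_in_ssDen_source])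
  have "D (t + p) - D p \<in> Den n"
    using D_ssDen_source[OF t] by (simp add: twod_def d_add)
  then show ?thesis
    by (simp add: ssd_def r_coset_subgrp some add_rcoset_eq_iff[OF add_subgroup_Den])
qed

lemma image_bockstein:
  "bockstein n ` carrier (E_source n) = (\<lambda>x. add_rcoset (Den n) (in2 (d x))) ` {x. d x \<in> IC2 n}"
  unfolding ssE_def carrier_subgrp_Mod ssZ_source image_image bockstein_add_rcoset D_in1 ..

definition grade_map :: "nat \<Rightarrow> ('a \<times> 'b) set \<Rightarrow> 'b set set" where
  "grade_map n c = gr_class sb I d n (snd (SOME p. p \<in> c))"

lemma grade_map_add_rcoset: "grade_map n (add_rcoset (Den n) p) = gr_class sb I d n (snd p)"
proof -
  obtain t where "t \<in> Den n" and some: "(SOME q. q \<in> add_rcoset (Den n) p) = t + p"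
    by (rule some_in_add_rcoset[OF add_subgroup_zero[OF add_subgroup_Den]])
  then have "snd (t + p) - snd p \<in> ssum (IC2 (Suc n)) (range d)"
    using snd_Den by simp
  then show ?thesis
    unfolding grade_map_def some by (simp only: gr_class_eq_iff)
qed

lemma group_hom_grade_map: "group_hom (E_target n) (gradedH2 sb I d n) (grade_map n)"
proof -
  have "grade_map n \<in> hom (E_target n) (gradedH2 sb I d n)"
  proof (rule homI)
    show "grade_map n X \<in> carrier (gradedH2 sb I d n)" if "X \<in> carrier (E_target n)" for X
      using that by (auto simp: carrier_E_target carrier_gradedH2 grade_map_add_rcoset)
  next
    fix X Y assume "X \<in> carrier (E_target n)" "Y \<in> carrier (E_target n)"
    then obtain a b where "X = add_rcoset (Den n) (in2 a)" "Y = add_rcoset (Den n) (in2 b)"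
      unfolding carrier_E_target by blast
    then show "grade_map n (X \<otimes>\<^bsub>E_target n\<^esub> Y)
        = grade_map n X \<otimes>\<^bsub>gradedH2 sb I d n\<^esub> grade_map n Y"
      by (simp add: mult_E_target ssum_add_rcoset[OF add_subgroup_Den] grade_map_add_rcoset
          mult_gradedH2)
  qed
  then show ?thesis
    using comm_group.axioms(2)[OF comm_group_E_target] comm_group.axioms(2)[OF comm_group_gradedH2]
    by (intro group_hom.intro group_hom_axioms.intro)
qed

lemma grade_map_onto: "grade_map n ` carrier (E_target n) = carrier (gradedH2 sb I d n)"
  by (simp add: carrier_E_target carrier_gradedH2 image_image grade_map_add_rcoset)

lemma image_bockstein_boundary_classes:
  "bockstein n ` carrier (E_source n)
    = (\<lambda>y. add_rcoset (Den n) (in2 y)) ` (IC2 n \<inter> ssum (IC2 (Suc n)) (range d))"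
  unfolding image_bockstein
proof (intro equalityI subsetI)
  fix C assume "C \<in> (\<lambda>x. add_rcoset (Den n) (in2 (d x))) ` {x. d x \<in> IC2 n}"
  then obtain x where "d x \<in> IC2 n" "C = add_rcoset (Den n) (in2 (d x))"
    by blast
  moreover have "0 + d x \<in> ssum (IC2 (Suc n)) (range d)"
    by (intro ssumI) simp_all
  ultimately show "C \<in> (\<lambda>y. add_rcoset (Den n) (in2 y)) ` (IC2 n \<inter> ssum (IC2 (Suc n)) (range d))"
    by simp
next
  fix C assume "C \<in> (\<lambda>y. add_rcoset (Den n) (in2 y)) ` (IC2 n \<inter> ssum (IC2 (Suc n)) (range d))"
  then obtain y m x where y: "y \<in> IC2 n" and m: "m \<in> IC2 (Suc n)" and "y = m + d x"
    and C: "C = add_rcoset (Den n) (in2 y)"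
    by (auto elim!: ssumE)
  then have "d x = y - m" by simp
  also have "\<dots> \<in> IC2 n"
    using y subsetD[OF modpow_Suc_subset[OF ideal] m]
    by (rule add_subgroup_diff[OF add_subgroup_modpow])
  finally have "d x \<in> IC2 n" .
  moreover have "in2 y - in2 (d x) \<in> Den n"
    using in2_in_Den[OF m] by (simp add: \<open>y = m + d x\<close>)
  then have "C = add_rcoset (Den n) (in2 (d x))"
    by (simp only: C add_rcoset_eq_iff[OF add_subgroup_Den])
  ultimately show "C \<in> (\<lambda>x. add_rcoset (Den n) (in2 (d x))) ` {x. d x \<in> IC2 n}"
    by blast
qed

lemma kernel_grade_map:
  "kernel (E_target n) (gradedH2 sb I d n) (grade_map n) = bockstein n ` carrier (E_source n)"
proof -
  have grade_map_eq_one_iff: "grade_map n (add_rcoset (Den n) (in2 y)) = \<one>\<^bsub>gradedH2 sb I d n\<^esub>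
      \<longleftrightarrow> y \<in> ssum (IC2 (Suc n)) (range d)" for y
    by (simp add: grade_map_add_rcoset one_gradedH2 gr_class_eq_iff)
  have "kernel (E_target n) (gradedH2 sb I d n) (grade_map n) = (\<lambda>y. add_rcoset (Den n) (in2 y)) `
      {y \<in> IC2 n. grade_map n (add_rcoset (Den n) (in2 y)) = \<one>\<^bsub>gradedH2 sb I d n\<^esub>}"
    by (simp only: kernel_def carrier_E_target image_image Compr_image_eq)
  also have "\<dots> = (\<lambda>y. add_rcoset (Den n) (in2 y)) ` (IC2 n \<inter> ssum (IC2 (Suc n)) (range d))"
    by (simp only: grade_map_eq_one_iff Int_def)
  also have "\<dots> = bockstein n ` carrier (E_source n)"
    by (rule image_bockstein_boundary_classes[symmetric])
  finally show ?thesis .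
qed

theorem bockstein_coker_iso:
  "\<exists>\<phi>. \<phi> \<in> iso (bockstein_coker sa sb I d k) (gradedH2 sb I d k) \<and>
       (\<forall>y \<in> IC2 k. \<phi> (bock_class sa sb I d k y) = gr_class sb I d k y)"
proof -
  interpret grade: group_hom "E_target k" "gradedH2 sb I d k" "grade_map k"
    by (rule group_hom_grade_map)
  let ?K = "kernel (E_target k) (gradedH2 sb I d k) (grade_map k)"
  have coker: "bockstein_coker sa sb I d k = E_target k Mod ?K"
    by (simp add: bockstein_coker_def ssd_coker_def kernel_grade_map)
  have "bock_class sa sb I d k y = ?K #>\<^bsub>E_target k\<^esub> add_rcoset (Den k) (in2 y)" for y
    by (simp add: bock_class_def Let_def kernel_grade_map r_coset_subgrp)
  then have "the_elem (grade_map k ` bock_class sa sb I d k y) = gr_class sb I d k y"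
    if "y \<in> IC2 k" for y
    using that by (simp add: grade.image_kernel_rcos carrier_E_target grade_map_add_rcoset)
  with grade.FactGroup_iso_set[OF grade_map_onto] show ?thesis
    unfolding coker by blast
qed

end

theorem propositionA8:
  fixes sa :: "'r::ring_1 \<Rightarrow> 'a::ab_group_add \<Rightarrow> 'a"
    and sb :: "'r \<Rightarrow> 'b::ab_group_add \<Rightarrow> 'b"
    and I :: "'r set"
    and d :: "'a \<Rightarrow> 'b"
    and k :: nat
  assumes "lmod sa" and "lmod sb"
    and "two_sided_ideal I"
    and "rlinear sa sb d"
    and "k \<ge> 1"
  shows "\<exists>\<phi>. \<phi> \<in> iso (bockstein_coker sa sb I d k) (gradedH2 sb I d k) \<and>
           (\<forall>y \<in> modpow sb I k UNIV. \<phi> (bock_class sa sb I d k y) = gr_class sb I d k y)"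
proof -
  interpret two_term_complex sa sb I d
    using assms(1,3,4) by unfold_locales (simp_all add: rlinear_def)
  show ?thesis
    by (rule bockstein_coker_iso)
qed

end
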